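(* Let $(\Omega,\mathcal R,\mathcal K)$ be a bidirectional kinetic system satisfying the detailed balance property, and let $E$ be an energy of it. Let $U\subset\Omega$ be nonempty, $V=\Omega\setminus U$, $n_U\in(0,\infty)^{|U|}$, and consider the reduced system $(V,\mathcal R_V,\mathcal K[n_U])$. Assume that no $R\in\mathcal R$ has $\pi_VR=0$ and that every $R\in\mathcal R_V$ is a $1$-$1$ reaction. Let $n$ be a positive solution of the system with fluxes $$\frac{dn}{dt}=\sum_{R\in\mathcal R_s}RJ_R(n)+J^E(t),\qquad \pi_Un(0)=n_U.$$ Then $$\partial_tF(n)=-\mathcal D_R(n)+J^{ext}(n),$$ where $F(n)=\sum_{j\in\Omega}n_j\big(\log(n_je^{E(j)})-1\big)$, $$\mathcal D_R(n)=\sum_{R\in\mathcal R_s}K_{\pi_VR}[n_U]\prod_{i\in I(R)\cap V}n_i^{-R(i)}\Big(\frac{K_{-\pi_VR}[n_U]}{K_{\pi_VR}[n_U]}\prod_{i\in V}n_i^{R(i)}-1\Big)\log\Big(\frac{K_{-\pi_VR}[n_U]}{K_{\pi_VR}[n_U]}\prod_{j\in V}n_j^{R(j)}\Big),$$ and $J^{ext}(n)=\sum_{j\in U}J^E_j(t)\log(n_je^{E(j)})$.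
   Context: A chemical network is $(\Omega,\mathcal R)$ with $\Omega=\{1,\dots,N\}$ and $\mathcal R$ a finite set of nonzero vectors of $\mathbb Z^N$. $I(R)=\{i:R(i)<0\}$, $F(R)=\{i:R(i)>0\}$. Bidirectional: $R\in\mathcal R\Rightarrow-R\in\mathcal R$. $\mathcal R_s$ contains exactly one of each pair $\{R,-R\}$ (the one with $\min I(R)<\min F(R)$); the matrix of reactions $\mathbf R$ has the elements $R_1,\dots$ of $\mathcal R_s$ as columns. Kinetic system: rates $\mathcal K:\mathcal R\to(0,\infty)$, $K_R=\mathcal K(R)$. Fluxes: $J_R(n)=K_R\prod_{j\in I(R)}n_j^{-R(j)}-K_{-R}\prod_{j\in F(R)}n_j^{R(j)}$. Detailed balance: there is $\bar N\in(0,\infty)^N$ with $J_R(\bar N)=0$ for all $R\in\mathcal R_s$. An energy is any $E\in\mathbb R^N$ with $\mathbf R^TE=w$, $w(i)=\log(K_{-R_i}/K_{R_i})$. External fluxes: $J^E_j(t)=-\sum_{R\in\mathcal R_s}R(j)J_R(n(t))$ (scalar) for $j\in U$, and $J^E(t)=\sum_{j\in U}J^E_j(t)e_j$. Reduction: $\pi_Av=(v(i))_{i\in A}$; $\mathcal R_V=\{\pi_V\bar R:\bar R\in\mathcal R,\pi_V\bar R\ne0\}$; $R\in\mathcal R_V$ is $1$-$1$ if exactly one $\bar R\in\mathcal R$ has $\pi_V\bar R=R$; reduced rates $K_R[n_U]=\sum_{\bar R\in\mathcal R:\pi_V\bar R=R}K_{\bar R}\prod_{s\in U\cap I(\bar R)}n_s^{-\bar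 R(s)}$. *)

theory Defs
  imports Complex_Main
begin

text \<open>A reaction (a vector of Z^N)
  is a function nat => int that vanishes outside Omega. A concentration vector is a
  function nat => real (only its values on Omega matter).\<close>

type_synonym reaction = "nat \<Rightarrow> int"
type_synonym conc = "nat \<Rightarrow> real"

definition Omega :: "nat \<Rightarrow> nat set" where
  "Omega N = {1..N}"

definition neg :: "reaction \<Rightarrow> reaction" where
  "neg R = (\<lambda>i. - R i)"

definition Ireac :: "reaction \<Rightarrow> nat set" where
  "Ireac R = {i. R i < 0}"

definition Freac :: "reaction \<Rightarrow> nat set" where
  "Freac R = {i. R i > 0}"

definition chemical_network :: "nat \<Rightarrow> reaction set \<Rightarrow> bool" where
  "chemical_network N RR \<longleftrightarrow> finite RR \<and>
     (\<forall>R\<in>RR. R \<noteq> (\<lambda>_. 0) \<and> (\<forall>i. i \<notin> Omega N \<longrightarrow> R i = 0))"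

definition bidirectional :: "reaction set \<Rightarrow> bool" where
  "bidirectional RR \<longleftrightarrow> (\<forall>R\<in>RR. neg R \<in> RR)"

text \<open>Selection of R_s: R is selected iff min I(R) < min F(R), with the convention
  min {} = infinity.\<close>
definition selected :: "reaction \<Rightarrow> bool" where
  "selected R \<longleftrightarrow> Ireac R \<noteq> {} \<and> (Freac R = {} \<or> Min (Ireac R) < Min (Freac R))"

definition Rs :: "reaction set \<Rightarrow> reaction set" where
  "Rs RR = {R \<in> RR. selected R}"

definition kinetic_system :: "nat \<Rightarrow> reaction set \<Rightarrow> (reaction \<Rightarrow> real) \<Rightarrow> bool" where
  "kinetic_system N RR K \<longleftrightarrow> chemical_network N RR \<and> (\<forall>R\<in>RR. K R > 0)"

definition flux :: "(reaction \<Rightarrow> real) \<Rightarrow> reaction \<Rightarrow> conc \<Rightarrow> real" where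
  "flux K R n =
     K R * (\<Prod>j\<in>Ireac R. n j powr (of_int (- R j)))
     - K (neg R) * (\<Prod>j\<in>Freac R. n j powr (of_int (R j)))"

definition detailed_balance :: "nat \<Rightarrow> reaction set \<Rightarrow> (reaction \<Rightarrow> real) \<Rightarrow> bool" where
  "detailed_balance N RR K \<longleftrightarrow>
     (\<exists>Nbar :: conc. (\<forall>i\<in>Omega N. Nbar i > 0) \<and> (\<forall>R\<in>Rs RR. flux K R Nbar = 0))"

text \<open>E is an energy iff R^T E = w, i.e. for every column R_i of the matrix of reactions
  (the elements of R_s), sum_j R_i(j) E(j) = log (K(-R_i)/K(R_i)).\<close>
definition is_energy :: "nat \<Rightarrow> reaction set \<Rightarrow> (reaction \<Rightarrow> real) \<Rightarrow> (nat \<Rightarrow> real) \<Rightarrow> bool" where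
  "is_energy N RR K E \<longleftrightarrow>
     (\<forall>R\<in>Rs RR. (\<Sum>j\<in>Omega N. of_int (R j) * E j) = ln (K (neg R) / K R))"

text \<open>Projection pi_V, realised as restriction to V (entries outside V set to 0).\<close>
definition proj :: "nat set \<Rightarrow> reaction \<Rightarrow> reaction" where
  "proj A R = (\<lambda>i. if i \<in> A then R i else 0)"

definition reduced_reactions :: "nat set \<Rightarrow> reaction set \<Rightarrow> reaction set" where
  "reduced_reactions V RR = {proj V Rb | Rb. Rb \<in> RR \<and> proj V Rb \<noteq> (\<lambda>_. 0)}"

definition one_one :: "nat set \<Rightarrow> reaction set \<Rightarrow> reaction \<Rightarrow> bool" where
  "one_one V RR R \<longleftrightarrow> (\<exists>!Rb. Rb \<in> RR \<and> proj V Rb = R)"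

definition reduced_rate ::
  "nat set \<Rightarrow> nat set \<Rightarrow> reaction set \<Rightarrow> (reaction \<Rightarrow> real) \<Rightarrow> conc \<Rightarrow> reaction \<Rightarrow> real" where
  "reduced_rate U V RR K nU R =
     (\<Sum>Rb\<in>{Rb \<in> RR. proj V Rb = R}.
        K Rb * (\<Prod>s\<in>U \<inter> Ireac Rb. nU s powr (of_int (- Rb s))))"

definition ext_flux :: "reaction set \<Rightarrow> (reaction \<Rightarrow> real) \<Rightarrow> nat set \<Rightarrow> conc \<Rightarrow> nat \<Rightarrow> real" where
  "ext_flux RR K U n j =
     (if j \<in> U then - (\<Sum>R\<in>Rs RR. of_int (R j) * flux K R n) else 0)"

definition free_energy :: "nat \<Rightarrow> (nat \<Rightarrow> real) \<Rightarrow> conc \<Rightarrow> real" where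
  "free_energy N E n = (\<Sum>j\<in>Omega N. n j * (ln (n j * exp (E j)) - 1))"

definition dissipation ::
  "nat set \<Rightarrow> nat set \<Rightarrow> reaction set \<Rightarrow> (reaction \<Rightarrow> real) \<Rightarrow> conc \<Rightarrow> conc \<Rightarrow> real" where
  "dissipation U V RR K nU n =
     (\<Sum>R\<in>Rs RR.
        let KR = reduced_rate U V RR K nU;
            r = KR (neg (proj V R)) / KR (proj V R)
        in KR (proj V R) * (\<Prod>i\<in>Ireac R \<inter> V. n i powr (of_int (- R i)))
           * (r * (\<Prod>i\<in>V. n i powr (of_int (R i))) - 1)
           * ln (r * (\<Prod>j\<in>V. n j powr (of_int (R j)))))"

definition ext_term ::
  "reaction set \<Rightarrow> (reaction \<Rightarrow> real) \<Rightarrow> nat set \<Rightarrow> (nat \<Rightarrow> real) \<Rightarrow> conc \<Rightarrow> real" where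
  "ext_term RR K U E n = (\<Sum>j\<in>U. ext_flux RR K U n j * ln (n j * exp (E j)))"

end

theory Submission
  imports Defs "HOL-Analysis.Analysis"
begin

text \<open>The species of U are chemostatted: on U the external flux cancels the reaction flux,
  so n stays equal to its initial value nU there. Differentiating F gives
  \<Sum>j n_j' log (n_j e^E(j)); regrouped per reaction and using the energy equation, the
  reaction part is \<Sum>R J_R(n) log (K(-R)/K(R) \<Prod>j n_j^R(j)). Since every reduced reaction
  is 1-1, the reduced rate of \<pi>_V R is K(R) times the U-part of the forward monomial of R
  (and likewise for -R), so once n = nU on U the R-summand of D_R(n) is exactly -J_R(n)
  times the same logarithm.\<close>

lemma neg_proj: "neg (proj V R) = proj V (neg R)"
  by (auto simp: neg_def proj_def)

lemma Ireac_neg: "Ireac (neg R) = Freac R"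
  by (auto simp: Ireac_def Freac_def neg_def)

lemma reduced_rate_one_one:
  assumes "Rb \<in> RR" and "one_one V RR (proj V Rb)"
  shows "reduced_rate U V RR K nU (proj V Rb)
           = K Rb * (\<Prod>s\<in>U \<inter> Ireac Rb. nU s powr of_int (- Rb s))"
proof -
  have "{Rb' \<in> RR. proj V Rb' = proj V Rb} = {Rb}"
    using assms unfolding one_one_def by blast
  then show ?thesis by (simp add: reduced_rate_def)
qed

lemma reduced_rate_neg_one_one:
  assumes "neg R \<in> RR" and "one_one V RR (proj V (neg R))"
  shows "reduced_rate U V RR K nU (neg (proj V R))
           = K (neg R) * (\<Prod>s\<in>U \<inter> Freac R. nU s powr of_int (R s))"
  using reduced_rate_one_one[OF assms] by (simp add: neg_proj Ireac_neg) (simp add: neg_def)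

lemma prod_powr_Ireac_Freac:
  fixes m :: conc
  assumes "finite A" and "\<forall>i\<in>A. m i > 0"
  shows "(\<Prod>i\<in>A. m i powr of_int (R i)) * (\<Prod>i\<in>A \<inter> Ireac R. m i powr of_int (- R i))
           = (\<Prod>i\<in>A \<inter> Freac R. m i powr of_int (R i))"
proof -
  let ?p = "\<lambda>i. m i powr of_int (R i)"
  have "prod ?p A = prod ?p (A \<inter> Ireac R \<union> A \<inter> Freac R)"
  proof (intro prod.mono_neutral_right ballI)
    fix i assume "i \<in> A - (A \<inter> Ireac R \<union> A \<inter> Freac R)"
    then have "R i = 0" by (auto simp: Ireac_def Freac_def)
    then show "?p i = 1" using \<open>i \<in> A - _\<close> assms(2) by auto
  qed (use assms(1) in auto)
  also have "\<dots> = prod ?p (A \<inter> Ireac R) * prod ?p (A \<inter> Freac R)"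
    using assms(1) by (intro prod.union_disjoint) (auto simp: Ireac_def Freac_def)
  finally have "prod ?p A * (\<Prod>i\<in>A \<inter> Ireac R. m i powr of_int (- R i))
      = (\<Prod>i\<in>A \<inter> Ireac R. ?p i * m i powr of_int (- R i)) * prod ?p (A \<inter> Freac R)"
    by (simp add: prod.distrib mult_ac)
  also have "(\<Prod>i\<in>A \<inter> Ireac R. ?p i * m i powr of_int (- R i)) = 1"
    using assms(2) by (intro prod.neutral) (auto simp: powr_add[symmetric])
  finally show ?thesis by simp
qed

lemma prod_Ireac_Freac_split:
  fixes f :: "nat \<Rightarrow> real"
  assumes "finite Om" and "V = Om - U" and "\<forall>i. i \<notin> Om \<longrightarrow> R i = 0"
  shows "prod f (Ireac R) = prod f (U \<inter> Ireac R) * prod f (Ireac R \<inter> V)"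
    and "prod f (Freac R) = prod f (U \<inter> Freac R) * prod f (V \<inter> Freac R)"
proof -
  have "Ireac R \<subseteq> Om" "Freac R \<subseteq> Om"
    using assms(3) by (auto simp: Ireac_def Freac_def)
  moreover from this have "Ireac R - U = Ireac R \<inter> V" "Freac R - U = V \<inter> Freac R"
    using assms(2) by auto
  ultimately show "prod f (Ireac R) = prod f (U \<inter> Ireac R) * prod f (Ireac R \<inter> V)"
    and "prod f (Freac R) = prod f (U \<inter> Freac R) * prod f (V \<inter> Freac R)"
    using assms(1) prod.Int_Diff[of "Ireac R" f U] prod.Int_Diff[of "Freac R" f U]
    by (auto simp: Int_commute intro: finite_subset)
qed

lemma dissipation_summand_eq:
  fixes R :: reaction and m nU :: conc
  assumes fin: "finite Om" and U: "U \<subseteq> Om" and V: "V = Om - U"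
    and supp: "\<forall>i. i \<notin> Om \<longrightarrow> R i = 0"
    and m_pos: "\<forall>i\<in>Om. m i > 0" and m_U: "\<forall>i\<in>U. nU i = m i"
    and K_pos: "K R > 0"
    and a: "a = K R * (\<Prod>s\<in>U \<inter> Ireac R. nU s powr of_int (- R s))"
    and b: "b = K (neg R) * (\<Prod>s\<in>U \<inter> Freac R. nU s powr of_int (R s))"
  shows "a * (\<Prod>i\<in>Ireac R \<inter> V. m i powr of_int (- R i))
           * (b / a * (\<Prod>i\<in>V. m i powr of_int (R i)) - 1)
           * ln (b / a * (\<Prod>j\<in>V. m j powr of_int (R j)))
         = - flux K R m * ln (K (neg R) / K R * (\<Prod>j\<in>Om. m j powr of_int (R j)))"
proof -
  define x where "x = (\<Prod>i\<in>Ireac R \<inter> V. m i powr of_int (- R i))"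
  define p where "p = (\<Prod>i\<in>V. m i powr of_int (R i))"
  have fin_UV: "finite U" "finite V"
    using fin U V by (auto intro: finite_subset)
  have pos_UV: "\<forall>i\<in>U. m i > 0" "\<forall>i\<in>V. m i > 0"
    using m_pos U V by auto
  have a_m: "a = K R * (\<Prod>s\<in>U \<inter> Ireac R. m s powr of_int (- R s))"
    and b_m: "b = K (neg R) * (\<Prod>s\<in>U \<inter> Freac R. m s powr of_int (R s))"
    using m_U by (simp_all add: a b)
  have "a > 0"
    unfolding a_m using K_pos pos_UV(1) by (intro mult_pos_pos prod_pos) auto
  have "flux K R m = a * x - b * (p * x)"
    using prod_powr_Ireac_Freac[OF fin_UV(2) pos_UV(2), of R]
    unfolding flux_def prod_Ireac_Freac_split[OF fin V supp] a_m b_m x_def p_def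
    by (simp add: Int_commute mult_ac)
  moreover have "b / a * p = K (neg R) / K R * (\<Prod>j\<in>Om. m j powr of_int (R j))"
  proof -
    have "(\<Prod>j\<in>Om. m j powr of_int (R j)) = (\<Prod>j\<in>U. m j powr of_int (R j)) * p"
      unfolding p_def V using prod.subset_diff[OF U fin] by (simp add: mult.commute)
    moreover have "(\<Prod>s\<in>U \<inter> Ireac R. m s powr of_int (- R s)) > 0"
      using pos_UV(1) by (intro prod_pos) auto
    ultimately show ?thesis
      using prod_powr_Ireac_Freac[OF fin_UV(1) pos_UV(1), of R] K_pos
      unfolding a_m b_m by (simp add: field_simps)
  qed
  moreover have "a * x * (b / a * p - 1) = - (a * x - b * (p * x))"
    using \<open>a > 0\<close> by (simp add: field_simps)
  ultimately show ?thesis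
    unfolding x_def[symmetric] p_def[symmetric] by simp
qed

lemma dissipation_eq_flux_affinity:
  assumes kin: "kinetic_system N RR K" and bidir: "bidirectional RR"
    and U: "U \<subseteq> Omega N" and V: "V = Omega N - U"
    and one_one: "\<forall>R\<in>RR. one_one V RR (proj V R)"
    and m_pos: "\<forall>i\<in>Omega N. m i > 0" and m_U: "\<forall>i\<in>U. nU i = m i"
  shows "dissipation U V RR K nU m
           = - (\<Sum>R\<in>Rs RR. flux K R m
                  * ln (K (neg R) / K R * (\<Prod>j\<in>Omega N. m j powr of_int (R j))))"
proof -
  let ?KR = "reduced_rate U V RR K nU"
  have "?KR (proj V R) * (\<Prod>i\<in>Ireac R \<inter> V. m i powr of_int (- R i))
      * (?KR (neg (proj V R)) / ?KR (proj V R) * (\<Prod>i\<in>V. m i powr of_int (R i)) - 1)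
      * ln (?KR (neg (proj V R)) / ?KR (proj V R) * (\<Prod>j\<in>V. m j powr of_int (R j)))
    = - flux K R m * ln (K (neg R) / K R * (\<Prod>j\<in>Omega N. m j powr of_int (R j)))"
    if "R \<in> Rs RR" for R
  proof -
    from that have R: "R \<in> RR" and negR: "neg R \<in> RR"
      using bidir by (auto simp: Rs_def bidirectional_def)
    then have supp: "\<forall>i. i \<notin> Omega N \<longrightarrow> R i = 0" and "K R > 0"
      using kin by (auto simp: kinetic_system_def chemical_network_def)
    show ?thesis
      using one_one R negR
      by (intro dissipation_summand_eq[where K = K, OF _ U V supp m_pos m_U \<open>K R > 0\<close>])
        (auto simp: Omega_def reduced_rate_one_one reduced_rate_neg_one_one)
  qed
  then show ?thesis
    unfolding dissipation_def Let_def by (simp add: sum_negf[symmetric])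
qed

lemma ln_affinity_eq_energy:
  assumes energy: "is_energy N RR K E" and R: "R \<in> Rs RR"
    and K_pos: "K R > 0" "K (neg R) > 0" and m_pos: "\<forall>j\<in>Omega N. m j > 0"
  shows "ln (K (neg R) / K R * (\<Prod>j\<in>Omega N. m j powr of_int (R j)))
           = (\<Sum>j\<in>Omega N. of_int (R j) * ln (m j * exp (E j)))"
proof -
  have "ln (K (neg R) / K R * (\<Prod>j\<in>Omega N. m j powr of_int (R j)))
      = ln (K (neg R) / K R) + (\<Sum>j\<in>Omega N. of_int (R j) * ln (m j))"
  proof -
    have "ln (\<Prod>j\<in>Omega N. m j powr of_int (R j)) = (\<Sum>j\<in>Omega N. of_int (R j) * ln (m j))"
      using m_pos by (subst ln_prod) (force simp: Omega_def)+
    moreover have "(\<Prod>j\<in>Omega N. m j powr of_int (R j)) > 0"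
      using m_pos by (intro prod_pos) auto
    ultimately show ?thesis
      using K_pos by (subst ln_mult) auto
  qed
  also have "ln (K (neg R) / K R) = (\<Sum>j\<in>Omega N. of_int (R j) * E j)"
    using energy R by (simp add: is_energy_def)
  also have "(\<Sum>j\<in>Omega N. of_int (R j) * E j) + (\<Sum>j\<in>Omega N. of_int (R j) * ln (m j))
      = (\<Sum>j\<in>Omega N. of_int (R j) * ln (m j * exp (E j)))"
    unfolding sum.distrib[symmetric] using m_pos by (intro sum.cong) (auto simp: ln_mult algebra_simps)
  finally show ?thesis .
qed

lemma free_energy_has_derivative:
  assumes n_pos: "\<forall>j\<in>Omega N. n t j > 0"
    and n_deriv: "\<forall>j\<in>Omega N. ((\<lambda>s. n s j) has_real_derivative d j) (at t within S)"
  shows "((\<lambda>s. free_energy N E (n s)) has_real_derivative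
           (\<Sum>j\<in>Omega N. d j * ln (n t j * exp (E j)))) (at t within S)"
  unfolding free_energy_def
proof (rule DERIV_sum)
  fix j assume "j \<in> Omega N"
  with n_pos n_deriv have "n t j > 0" and "((\<lambda>s. n s j) has_real_derivative d j) (at t within S)"
    by auto
  then show "((\<lambda>s. n s j * (ln (n s j * exp (E j)) - 1)) has_real_derivative
      d j * ln (n t j * exp (E j))) (at t within S)"
    by (auto intro!: derivative_eq_intros simp: field_simps)
qed

lemma chemostatted_species_constant:
  fixes n :: "real \<Rightarrow> conc"
  assumes U: "U \<subseteq> Omega N" and t: "t \<ge> 0"
    and ode: "\<forall>x\<ge>0. \<forall>j\<in>Omega N. ((\<lambda>s. n s j) has_real_derivative
        ((\<Sum>R\<in>Rs RR. of_int (R j) * flux K R (n x)) + ext_flux RR K U (n x) j))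
        (at x within {0..})"
  shows "\<forall>j\<in>U. n t j = n 0 j"
proof
  fix j assume "j \<in> U"
  have "\<exists>c. \<forall>x\<in>{0..}. n x j = c"
  proof (rule has_field_derivative_zero_constant)
    fix x :: real assume "x \<in> {0..}"
    with ode U \<open>j \<in> U\<close> have "((\<lambda>s. n s j) has_real_derivative
        ((\<Sum>R\<in>Rs RR. of_int (R j) * flux K R (n x)) + ext_flux RR K U (n x) j))
        (at x within {0..})" by auto
    with \<open>j \<in> U\<close> show "((\<lambda>s. n s j) has_real_derivative 0) (at x within {0..})"
      by (simp add: ext_flux_def)
  qed simp
  then show "n t j = n 0 j" using t by fastforce
qed

lemma sum_species_eq_sum_reactions:
  assumes "U \<subseteq> Omega N"
  shows "(\<Sum>j\<in>Omega N. ((\<Sum>R\<in>Rs RR. of_int (R j) * flux K R m) + ext_flux RR K U m j) * \<mu> j)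
       = (\<Sum>R\<in>Rs RR. flux K R m * (\<Sum>j\<in>Omega N. of_int (R j) * \<mu> j))
         + (\<Sum>j\<in>U. ext_flux RR K U m j * \<mu> j)"
proof -
  have "(\<Sum>j\<in>Omega N. (\<Sum>R\<in>Rs RR. of_int (R j) * flux K R m) * \<mu> j)
      = (\<Sum>R\<in>Rs RR. flux K R m * (\<Sum>j\<in>Omega N. of_int (R j) * \<mu> j))"
    unfolding sum_distrib_left sum_distrib_right by (subst sum.swap) (simp add: mult_ac)
  moreover have "(\<Sum>j\<in>Omega N. ext_flux RR K U m j * \<mu> j) = (\<Sum>j\<in>U. ext_flux RR K U m j * \<mu> j)"
    using assms by (intro sum.mono_neutral_right) (auto simp: ext_flux_def Omega_def)
  ultimately show ?thesis
    unfolding distrib_right sum.distrib by simp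
qed

theorem proposition7p4:
  fixes N :: nat and RR :: "reaction set" and K :: "reaction \<Rightarrow> real"
    and E :: "nat \<Rightarrow> real" and U V :: "nat set" and nU :: conc
    and n :: "real \<Rightarrow> conc"
  assumes kin: "kinetic_system N RR K"
    and bidir: "bidirectional RR"
    and db: "detailed_balance N RR K"
    and energy: "is_energy N RR K E"
    and U_sub: "U \<subseteq> Omega N" and U_ne: "U \<noteq> {}"
    and V_def: "V = Omega N - U"
    and nU_pos: "\<forall>j\<in>U. nU j > 0"
    and no_zero: "\<forall>R\<in>RR. proj V R \<noteq> (\<lambda>_. 0)"
    and all_one_one: "\<forall>R\<in>reduced_reactions V RR. one_one V RR R"
    and pos: "\<forall>t\<ge>0. \<forall>j\<in>Omega N. n t j > 0"
    and ode: "\<forall>t\<ge>0. \<forall>j\<in>Omega N.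
        ((\<lambda>s. n s j) has_real_derivative
           ((\<Sum>R\<in>Rs RR. of_int (R j) * flux K R (n t)) + ext_flux RR K U (n t) j))
          (at t within {0..})"
    and init: "\<forall>j\<in>U. n 0 j = nU j"
  shows "\<forall>t\<ge>0. ((\<lambda>s. free_energy N E (n s)) has_real_derivative
            (- dissipation U V RR K nU (n t) + ext_term RR K U E (n t)))
          (at t within {0..})"
proof (intro allI impI)
  \<comment> \<open>Detailed balance only guarantees that an energy exists.\<close>
  fix t :: real assume t: "t \<ge> 0"
  define \<mu> where "\<mu> j = ln (n t j * exp (E j))" for j
  have n_pos: "\<forall>j\<in>Omega N. n t j > 0"
    using pos t by blast
  have n_U: "\<forall>j\<in>U. nU j = n t j"
    using chemostatted_species_constant[OF U_sub t ode] init by simp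
  have one_one: "\<forall>R\<in>RR. one_one V RR (proj V R)"
    using no_zero all_one_one by (auto simp: reduced_reactions_def)
  have affinity: "ln (K (neg R) / K R * (\<Prod>j\<in>Omega N. n t j powr of_int (R j)))
      = (\<Sum>j\<in>Omega N. of_int (R j) * \<mu> j)" if "R \<in> Rs RR" for R
    using that kin bidir n_pos unfolding \<mu>_def
    by (intro ln_affinity_eq_energy[OF energy])
      (auto simp: Rs_def kinetic_system_def bidirectional_def)
  have "((\<lambda>s. free_energy N E (n s)) has_real_derivative
      (\<Sum>j\<in>Omega N. ((\<Sum>R\<in>Rs RR. of_int (R j) * flux K R (n t)) + ext_flux RR K U (n t) j) * \<mu> j))
      (at t within {0..})" (is "(_ has_real_derivative ?dF) _")
    unfolding \<mu>_def using n_pos ode t by (intro free_energy_has_derivative) auto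
  also have "?dF = (\<Sum>R\<in>Rs RR. flux K R (n t) * (\<Sum>j\<in>Omega N. of_int (R j) * \<mu> j))
      + ext_term RR K U E (n t)"
    unfolding sum_species_eq_sum_reactions[OF U_sub] ext_term_def \<mu>_def ..
  also have "(\<Sum>R\<in>Rs RR. flux K R (n t) * (\<Sum>j\<in>Omega N. of_int (R j) * \<mu> j))
      = - dissipation U V RR K nU (n t)"
    unfolding dissipation_eq_flux_affinity[OF kin bidir U_sub V_def one_one n_pos n_U]
    by (simp only: affinity cong: sum.cong)
  finally show "((\<lambda>s. free_energy N E (n s)) has_real_derivative
      (- dissipation U V RR K nU (n t) + ext_term RR K U E (n t))) (at t within {0..})" .
qed

end
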